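(* Let $n,N\in\mathbb N$, $\mathcal G=(\mathbb H^n)^N$, let $d\in C^\infty(\mathcal G\setminus\{0\})$ be a homogeneous norm, and fix $p\ge2$, $\theta\in\mathbb R$. With \[ Z_d=\frac{n+1}{n}\,\frac{z}{d}-\frac{p\theta}{2n}\,\frac{1}{d^2}\sum_{j=1}^Nt_j\,\nabla^{(j)\perp}d, \] every $u\in C_c^\infty(\mathcal G\setminus\{0\})$ satisfies \[ \int_{\mathcal G}\frac{|\langle\nabla_{\mathcal G}u,Z_d\rangle|^p}{d^{p(\theta-1)}}\,dz\,dt\ge\left|\frac{Q-p\theta}{p}\right|^p\int_{\mathcal G}\frac{|u|^p}{d^{p\theta}}\,dz\,dt . \]
   Context: $\mathcal G=(\mathbb H^n)^N$ is $\mathbb R^{2nN}\times\mathbb R^N$ with coordinates $z=(z^{(1)},\dots,z^{(N)})$, $z^{(j)}\in\mathbb R^{2n}$, $t=(t_1,\dots,t_N)$; group law $(z,t)\circ(\eta,\tau)=(z+\eta,t+\tau+\tfrac12(\langle B_{\mathbb H}z^{(1)},\eta^{(1)}\rangle,\dots,\langle B_{\mathbb H}z^{(N)},\eta^{(N)}\rangle))$ with $B_{\mathbb H}=\mathrm{diag}\left(\begin{pmatrix}0&4\\-4&0\end{pmatrix},\dots\right)\in\mathbb R^{2n\times2n}$; dilations $\delta_\gamma(z,t)=(\gamma z,\gamma^2t)$; $Q=2N(n+1)$. Horizontal fields $X^{(j)}_{2i-1}=\partial_{z^{(j)}_{2i-1}}+2z^{(j)}_{2i}\partial_{t_j}$,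 $X^{(j)}_{2i}=\partial_{z^{(j)}_{2i}}-2z^{(j)}_{2i-1}\partial_{t_j}$; $\nabla_{\mathcal G}$ is the vector of all of them; horizontal vector fields are identified with $\mathbb R^{2nN}$-valued functions via this basis. $\nabla^{(j)\perp}d$ has components $(-X^{(j)}_2d,X^{(j)}_1d,\dots,-X^{(j)}_{2n}d,X^{(j)}_{2n-1}d)$ in the $j$-th block and zero elsewhere. A homogeneous norm is a continuous $d\ge0$ with $d(\delta_\lambda(z,t))=\lambda d(z,t)$, $d>0$ off the origin, and satisfying the triangle inequality $d((z,t)\circ(\eta,\tau))\le d(z,t)+d(\eta,\tau)$. *)

theory Defs
  imports "HOL-Analysis.Analysis"
begin

text \<open>Points of G = (H^n)^N: pairs (z,t), z with z $ j $ i $ 1 = z^(j)_(2i-1),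
  z $ j $ i $ 2 = z^(j)_(2i); t $ j = t_j.  n = CARD('n), N = CARD('N).\<close>

type_synonym ('n, 'N) grp = "(real^2^'n^'N) \<times> (real^'N)"

definition Bform :: "real^2^'n \<Rightarrow> real^2^'n \<Rightarrow> real" where
  "Bform z \<eta> = (\<Sum>i\<in>UNIV. 4 * z$i$2 * \<eta>$i$1 - 4 * z$i$1 * \<eta>$i$2)"

definition gmult :: "('n::finite,'N::finite) grp \<Rightarrow> ('n,'N) grp \<Rightarrow> ('n,'N) grp" where
  "gmult x y = (fst x + fst y,
     snd x + snd y + (\<chi> j. (1/2) * Bform (fst x $ j) (fst y $ j)))"

definition dil :: "real \<Rightarrow> ('n::finite,'N::finite) grp \<Rightarrow> ('n,'N) grp" where
  "dil \<gamma> x = (\<gamma> *\<^sub>R fst x, (\<gamma>^2) *\<^sub>R snd x)"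

definition hom_norm :: "(('n::finite,'N::finite) grp \<Rightarrow> real) \<Rightarrow> bool" where
  "hom_norm d \<longleftrightarrow> continuous_on UNIV d \<and> (\<forall>x. d x \<ge> 0)
     \<and> (\<forall>r>0. \<forall>x. d (dil r x) = r * d x)
     \<and> (\<forall>x. x \<noteq> 0 \<longrightarrow> d x > 0)
     \<and> (\<forall>x y. d (gmult x y) \<le> d x + d y)"

fun Ck_on :: "nat \<Rightarrow> 'a::euclidean_space set \<Rightarrow> ('a \<Rightarrow> real) \<Rightarrow> bool" where
  "Ck_on 0 S f = continuous_on S f"
| "Ck_on (Suc k) S f = (f differentiable_on S \<and>
      (\<forall>b\<in>Basis. Ck_on k S (\<lambda>x. frechet_derivative f (at x) b)))"

definition smooth_on :: "'a::euclidean_space set \<Rightarrow> ('a \<Rightarrow> real) \<Rightarrow> bool" where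
  "smooth_on S f \<longleftrightarrow> (\<forall>k. Ck_on k S f)"

definition Cc_inf :: "'a::euclidean_space set \<Rightarrow> ('a \<Rightarrow> real) \<Rightarrow> bool" where
  "Cc_inf S u \<longleftrightarrow> smooth_on S u \<and> compact (closure {x. u x \<noteq> 0})
      \<and> closure {x. u x \<noteq> 0} \<subseteq> S"

definition zvec :: "'N \<Rightarrow> 'n \<Rightarrow> 2 \<Rightarrow> ('n::finite,'N::finite) grp" where
  "zvec j i k = ((\<chi> j'. \<chi> i'. \<chi> k'. if j' = j \<and> i' = i \<and> k' = k then 1 else 0), 0)"

definition tvec :: "'N \<Rightarrow> ('n::finite,'N::finite) grp" where
  "tvec j = (0, axis j 1)"

text \<open>Horizontal fields: X^(j)_(2i-1) (k = 1) and X^(j)_(2i) (k = 2).\<close>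
definition Xf :: "'N \<Rightarrow> 'n \<Rightarrow> 2 \<Rightarrow> (('n::finite,'N::finite) grp \<Rightarrow> real) \<Rightarrow> ('n,'N) grp \<Rightarrow> real" where
  "Xf j i k f x = frechet_derivative f (at x) (zvec j i k)
     + (if k = 1 then 2 * fst x $ j $ i $ 2 else - 2 * fst x $ j $ i $ 1)
       * frechet_derivative f (at x) (tvec j)"

definition hgrad :: "(('n::finite,'N::finite) grp \<Rightarrow> real) \<Rightarrow> ('n,'N) grp \<Rightarrow> real^2^'n^'N" where
  "hgrad f x = (\<chi> j. \<chi> i. \<chi> k. Xf j i k f x)"

definition hperp :: "'N \<Rightarrow> (('n::finite,'N::finite) grp \<Rightarrow> real) \<Rightarrow> ('n,'N) grp \<Rightarrow> real^2^'n^'N" where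
  "hperp j f x = (\<chi> j'. \<chi> i. \<chi> k. if j' = j then
       (if k = 1 then - Xf j i 2 f x else Xf j i 1 f x) else 0)"

definition Zfield :: "real \<Rightarrow> real \<Rightarrow> (('n::finite,'N::finite) grp \<Rightarrow> real) \<Rightarrow> ('n,'N) grp \<Rightarrow> real^2^'n^'N" where
  "Zfield p \<theta> d x =
     ((real CARD('n) + 1) / real CARD('n)) *\<^sub>R ((1 / d x) *\<^sub>R fst x)
     - (p * \<theta> / (2 * real CARD('n))) *\<^sub>R ((1 / (d x)^2) *\<^sub>R (\<Sum>j\<in>UNIV. (snd x $ j) *\<^sub>R hperp j d x))"

end

theory Submission
  imports Defs
begin

text \<open>By the commutation relation \<open>[X\<^sub>2\<^sub>i, X\<^sub>2\<^sub>i\<^sub>-\<^sub>1] = 4 \<partial>\<^sub>t\<^sub>j\<close> and Euler's identity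
  \<open>\<Sum> z \<cdot> \<partial>\<^sub>z d + 2 \<Sum> t\<^sub>j \<partial>\<^sub>t\<^sub>j d = d\<close> for the homogeneous norm, the weighted field
  \<open>W = d\<^sup>1\<^sup>-\<^sup>p\<^sup>\<theta> Z\<^sub>d\<close> has horizontal divergence \<open>(Q - p\<theta>) d\<^sup>-\<^sup>p\<^sup>\<theta>\<close> off the origin.
  Integrating the divergence of \<open>|u|\<^sup>p W\<close>, which vanishes since \<open>u\<close> has compact support away from
  the origin, gives
  \<open>(Q - p\<theta>) \<integral> |u|\<^sup>p d\<^sup>-\<^sup>p\<^sup>\<theta> = - p \<integral> sgn u |u|\<^sup>p\<^sup>-\<^sup>1 d\<^sup>1\<^sup>-\<^sup>p\<^sup>\<theta> \<langle>\<nabla>u, Z\<^sub>d\<rangle>\<close>,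
  and Young's inequality \<open>p a\<^sup>p\<^sup>-\<^sup>1 b \<le> (p - 1) \<mu> a\<^sup>p + \<mu>\<^sup>1\<^sup>-\<^sup>p b\<^sup>p\<close> with the optimal weight
  \<open>\<mu> = |Q - p\<theta>| / p\<close> turns this into the claimed bound. Only \<open>p > 1\<close>, \<open>C\<^sup>2\<close> regularity of \<open>d\<close>
  off the origin and \<open>C\<^sup>1\<close> regularity of \<open>u\<close> are used.\<close>

section \<open>Directional derivatives and \<open>C\<^sup>1\<close> functions\<close>

definition dir_deriv :: "('a::real_normed_vector \<Rightarrow> real) \<Rightarrow> 'a \<Rightarrow> 'a \<Rightarrow> real" where
  "dir_deriv f v x = frechet_derivative f (at x) v"

lemma dir_deriv_eq: "(f has_derivative f') (at x) \<Longrightarrow> dir_deriv f v x = f' v"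
  unfolding dir_deriv_def by (metis frechet_derivative_at)

lemma has_derivative_dir_deriv:
  "f differentiable (at x) \<Longrightarrow> (f has_derivative (\<lambda>v. dir_deriv f v x)) (at x)"
  unfolding dir_deriv_def using frechet_derivative_works by (metis eta_contract_eq)

lemma linear_dir_deriv: "f differentiable (at x) \<Longrightarrow> linear (\<lambda>v. dir_deriv f v x)"
  using has_derivative_dir_deriv has_derivative_linear by blast

lemma dir_deriv_add:
  "f differentiable (at x) \<Longrightarrow> g differentiable (at x) \<Longrightarrow>
    dir_deriv (\<lambda>y. f y + g y) v x = dir_deriv f v x + dir_deriv g v x"
  by (rule dir_deriv_eq) (intro has_derivative_add has_derivative_dir_deriv)

lemma dir_deriv_diff:
  "f differentiable (at x) \<Longrightarrow> g differentiable (at x) \<Longrightarrow>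
    dir_deriv (\<lambda>y. f y - g y) v x = dir_deriv f v x - dir_deriv g v x"
  by (rule dir_deriv_eq) (intro has_derivative_diff has_derivative_dir_deriv)

lemma dir_deriv_mult:
  "f differentiable (at x) \<Longrightarrow> g differentiable (at x) \<Longrightarrow>
    dir_deriv (\<lambda>y. f y * g y) v x = f x * dir_deriv g v x + dir_deriv f v x * g x"
  by (rule dir_deriv_eq) (intro has_derivative_mult has_derivative_dir_deriv)

lemma dir_deriv_cmult:
  "f differentiable (at x) \<Longrightarrow> dir_deriv (\<lambda>y. c * f y) v x = c * dir_deriv f v x"
  by (rule dir_deriv_eq) (intro has_derivative_mult_right has_derivative_dir_deriv)

lemma dir_deriv_minus: "f differentiable (at x) \<Longrightarrow> dir_deriv (\<lambda>y. - f y) v x = - dir_deriv f v x"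
  by (rule dir_deriv_eq) (intro has_derivative_minus has_derivative_dir_deriv)

lemma dir_deriv_const: "dir_deriv (\<lambda>y. c) v x = 0"
  by (rule dir_deriv_eq) (rule has_derivative_const)

lemma dir_deriv_linear: "bounded_linear L \<Longrightarrow> dir_deriv L v x = L v"
  by (rule dir_deriv_eq) (erule bounded_linear_imp_has_derivative)

lemma has_derivative_real_compose:
  assumes "(h has_real_derivative h') (at (f x))" and "f differentiable (at x)"
  shows "((\<lambda>y. h (f y)) has_derivative (\<lambda>v. h' * dir_deriv f v x)) (at x)"
  using has_derivative_compose[OF has_derivative_dir_deriv[OF assms(2)]
      assms(1)[unfolded has_field_derivative_def]]
  by (simp add: o_def mult.commute)

lemma dir_deriv_real_compose:
  "(h has_real_derivative h') (at (f x)) \<Longrightarrow> f differentiable (at x) \<Longrightarrow>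
    dir_deriv (\<lambda>y. h (f y)) v x = h' * dir_deriv f v x"
  by (rule dir_deriv_eq) (rule has_derivative_real_compose)

lemma dir_deriv_basis_expansion:
  fixes f :: "'a::euclidean_space \<Rightarrow> real"
  assumes "f differentiable (at x)"
  shows "dir_deriv f v x = (\<Sum>b\<in>Basis. (v \<bullet> b) * dir_deriv f b x)"
proof -
  have l: "linear (\<lambda>v. dir_deriv f v x)" using assms by (rule linear_dir_deriv)
  have "dir_deriv f v x = dir_deriv f (\<Sum>b\<in>Basis. (v \<bullet> b) *\<^sub>R b) x"
    by (simp add: euclidean_representation)
  also have "\<dots> = (\<Sum>b\<in>Basis. (v \<bullet> b) * dir_deriv f b x)"
    by (simp add: linear_sum[OF l] linear_scale[OF l])
  finally show ?thesis .
qed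

lemma has_real_derivative_line:
  assumes "f differentiable (at (y + s *\<^sub>R a))"
  shows "((\<lambda>s. f (y + s *\<^sub>R a)) has_real_derivative dir_deriv f a (y + s *\<^sub>R a)) (at s)"
proof -
  have l: "linear (\<lambda>v. dir_deriv f v (y + s *\<^sub>R a))" using assms by (rule linear_dir_deriv)
  have "((\<lambda>s. y + s *\<^sub>R a) has_derivative (\<lambda>t. t *\<^sub>R a)) (at s)"
    by (auto intro!: derivative_eq_intros)
  from has_derivative_compose[OF this has_derivative_dir_deriv[OF assms]]
  have "((\<lambda>s. f (y + s *\<^sub>R a)) has_derivative (\<lambda>t. t * dir_deriv f a (y + s *\<^sub>R a))) (at s)"
    by (simp add: o_def linear_scale[OF l])
  then show ?thesis
    unfolding has_field_derivative_def by (rule has_derivative_eq_rhs) (auto simp: mult.commute)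
qed

definition C1_on :: "'a::real_normed_vector set \<Rightarrow> ('a \<Rightarrow> real) \<Rightarrow> bool" where
  "C1_on S f \<longleftrightarrow> (\<forall>x\<in>S. f differentiable (at x)) \<and> (\<forall>v. continuous_on S (dir_deriv f v))"

lemma C1_on_differentiable: "C1_on S f \<Longrightarrow> x \<in> S \<Longrightarrow> f differentiable (at x)"
  unfolding C1_on_def by blast

lemma C1_on_continuous_dir_deriv: "C1_on S f \<Longrightarrow> continuous_on S (dir_deriv f v)"
  unfolding C1_on_def by blast

lemma C1_on_imp_continuous_on: "C1_on S f \<Longrightarrow> continuous_on S f"
  unfolding C1_on_def
  by (meson continuous_at_imp_continuous_on differentiable_imp_continuous_within)

lemma C1_on_subset: "C1_on T f \<Longrightarrow> S \<subseteq> T \<Longrightarrow> C1_on S f"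
  unfolding C1_on_def by (auto intro: continuous_on_subset)

lemma C1_on_const: "C1_on S (\<lambda>y. c)"
  unfolding C1_on_def by (simp add: dir_deriv_const)

lemma C1_on_linear: "bounded_linear L \<Longrightarrow> C1_on S L"
  unfolding C1_on_def by (auto simp: dir_deriv_linear bounded_linear_imp_differentiable)

lemma C1_on_add:
  assumes f: "C1_on S f" and g: "C1_on S g"
  shows "C1_on S (\<lambda>y. f y + g y)"
  unfolding C1_on_def
proof (intro conjI ballI allI)
  show "(\<lambda>y. f y + g y) differentiable (at x)" if "x \<in> S" for x
    using C1_on_differentiable[OF f that] C1_on_differentiable[OF g that] by (rule differentiable_add)
  show "continuous_on S (dir_deriv (\<lambda>y. f y + g y) v)" for v
    using continuous_on_add[OF C1_on_continuous_dir_deriv[OF f] C1_on_continuous_dir_deriv[OF g]]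
    by (rule continuous_on_eq) (simp add: dir_deriv_add C1_on_differentiable[OF f] C1_on_differentiable[OF g])
qed

lemma C1_on_mult:
  assumes f: "C1_on S f" and g: "C1_on S g"
  shows "C1_on S (\<lambda>y. f y * g y)"
  unfolding C1_on_def
proof (intro conjI ballI allI)
  show "(\<lambda>y. f y * g y) differentiable (at x)" if "x \<in> S" for x
    using C1_on_differentiable[OF f that] C1_on_differentiable[OF g that] by (rule differentiable_mult)
  have "continuous_on S (\<lambda>x. f x * dir_deriv g v x + dir_deriv f v x * g x)" for v
    using f g by (intro continuous_intros C1_on_imp_continuous_on C1_on_continuous_dir_deriv)
  then show "continuous_on S (dir_deriv (\<lambda>y. f y * g y) v)" for v
    by (rule continuous_on_eq) (simp add: dir_deriv_mult C1_on_differentiable[OF f] C1_on_differentiable[OF g])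
qed

lemma C1_on_minus: "C1_on S f \<Longrightarrow> C1_on S (\<lambda>y. - f y)"
  using C1_on_mult[OF C1_on_const[of S "-1"], of f] by simp

lemma C1_on_diff: "C1_on S f \<Longrightarrow> C1_on S g \<Longrightarrow> C1_on S (\<lambda>y. f y - g y)"
  using C1_on_add[OF _ C1_on_minus, of S f g] by simp

lemma C1_on_real_compose:
  assumes f: "C1_on S f"
    and h: "\<And>x. x \<in> S \<Longrightarrow> (h has_real_derivative h' (f x)) (at (f x))"
    and h': "continuous_on (f ` S) h'"
  shows "C1_on S (\<lambda>y. h (f y))"
  unfolding C1_on_def
proof (intro conjI ballI allI)
  fix x assume "x \<in> S"
  then show "(\<lambda>y. h (f y)) differentiable (at x)"
    using has_derivative_real_compose[OF h C1_on_differentiable[OF f]] by (auto intro: differentiableI)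
next
  fix v
  have "continuous_on S (\<lambda>x. h' (f x) * dir_deriv f v x)"
    using f by (intro continuous_intros C1_on_continuous_dir_deriv
        continuous_on_compose2[OF h'] C1_on_imp_continuous_on) auto
  then show "continuous_on S (dir_deriv (\<lambda>y. h (f y)) v)"
    by (rule continuous_on_eq) (simp add: dir_deriv_real_compose[OF h C1_on_differentiable[OF f]])
qed

lemma C1_on_cong:
  assumes S: "open S" and f: "C1_on S f" and eq: "\<And>x. x \<in> S \<Longrightarrow> f x = g x"
  shows "C1_on S g"
proof -
  have "(g has_derivative (\<lambda>v. dir_deriv f v x)) (at x)" if "x \<in> S" for x
    using has_derivative_transform_within_open[OF
        has_derivative_dir_deriv[OF C1_on_differentiable[OF f that]] S that eq] .
  then have "g differentiable (at x)" "dir_deriv g v x = dir_deriv f v x" if "x \<in> S" for x v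
    using that by (auto intro: differentiableI dir_deriv_eq)
  then show ?thesis
    using continuous_on_eq[OF C1_on_continuous_dir_deriv[OF f]] unfolding C1_on_def by metis
qed

lemma C1_on_Un: "open S \<Longrightarrow> open T \<Longrightarrow> C1_on S f \<Longrightarrow> C1_on T f \<Longrightarrow> C1_on (S \<union> T) f"
  unfolding C1_on_def by (auto intro: continuous_on_open_Un)

lemma C1_on_UNIV_if_compact_support:
  assumes "open S" "compact K" "K \<subseteq> S" "C1_on S f" "\<And>x. x \<notin> K \<Longrightarrow> f x = 0"
  shows "C1_on UNIV f"
proof -
  have oK: "open (- K)" using compact_imp_closed[OF assms(2)] by (simp add: open_Compl)
  have "C1_on (- K) f" by (rule C1_on_cong[OF oK C1_on_const]) (use assms(5) in auto)
  moreover have "S \<union> - K = UNIV" using assms(3) by auto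
  ultimately show ?thesis using C1_on_Un[OF assms(1) oK assms(4)] by metis
qed

lemma continuous_on_UNIV_if_compact_support:
  fixes f :: "'a::t2_space \<Rightarrow> real"
  assumes "open S" "compact K" "K \<subseteq> S" "continuous_on S f" "\<And>x. x \<notin> K \<Longrightarrow> f x = 0"
  shows "continuous_on UNIV f"
proof -
  have oK: "open (- K)" using compact_imp_closed[OF assms(2)] by (simp add: open_Compl)
  have "continuous_on (- K) f"
    by (rule continuous_on_eq[OF continuous_on_const]) (simp add: assms(5))
  moreover have "S \<union> - K = UNIV" using assms(3) by auto
  ultimately show ?thesis using continuous_on_open_Un[OF assms(1) oK assms(4)] by metis
qed

lemma C1_on_if_Ck_on_Suc:
  fixes f :: "'a::euclidean_space \<Rightarrow> real"
  assumes "open S" "Ck_on (Suc k) S f"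
  shows "C1_on S f"
  unfolding C1_on_def
proof (intro conjI ballI allI)
  show diff: "f differentiable (at x)" if "x \<in> S" for x
    using assms that differentiable_on_eq_differentiable_at by auto
  fix v
  have "continuous_on S (dir_deriv f b)" if "b \<in> Basis" for b
    using assms(2) that by (cases k) (auto simp: dir_deriv_def[abs_def] intro: differentiable_imp_continuous_on)
  then have "continuous_on S (\<lambda>x. \<Sum>b\<in>Basis. (v \<bullet> b) * dir_deriv f b x)"
    by (intro continuous_intros)
  then show "continuous_on S (dir_deriv f v)"
    by (rule continuous_on_eq) (simp add: dir_deriv_basis_expansion diff)
qed

lemma Ck_on_Suc_dir_deriv: "Ck_on (Suc k) S f \<Longrightarrow> b \<in> Basis \<Longrightarrow> Ck_on k S (dir_deriv f b)"
  by (simp add: dir_deriv_def[abs_def])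

lemma second_difference_mvt:
  fixes f :: "'a::real_normed_vector \<Rightarrow> real"
  assumes h: "h > 0"
    and S: "\<And>s t. s \<in> {0..h} \<Longrightarrow> t \<in> {0..h} \<Longrightarrow> x + s *\<^sub>R a + t *\<^sub>R b \<in> S"
    and f: "\<And>y. y \<in> S \<Longrightarrow> f differentiable (at y)"
    and fa: "\<And>y. y \<in> S \<Longrightarrow> dir_deriv f a differentiable (at y)"
  obtains \<xi> \<eta> where "\<xi> \<in> {0<..<h}" "\<eta> \<in> {0<..<h}"
    "f (x + h *\<^sub>R a + h *\<^sub>R b) - f (x + h *\<^sub>R a) - f (x + h *\<^sub>R b) + f x
       = h\<^sup>2 * dir_deriv (dir_deriv f a) b (x + \<xi> *\<^sub>R a + \<eta> *\<^sub>R b)"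
proof -
  define G where "G s = f ((x + h *\<^sub>R b) + s *\<^sub>R a) - f (x + s *\<^sub>R a)" for s
  have "(G has_derivative (\<lambda>t. (dir_deriv f a ((x + h *\<^sub>R b) + s *\<^sub>R a) - dir_deriv f a (x + s *\<^sub>R a)) * t))
      (at s within {0..h})" if "0 \<le> s" "s \<le> h" for s
  proof -
    have "(x + h *\<^sub>R b) + s *\<^sub>R a \<in> S" "x + s *\<^sub>R a \<in> S"
      using S[of s h] S[of s 0] that h by (simp_all add: add_ac)
    then have "(G has_real_derivative
        dir_deriv f a ((x + h *\<^sub>R b) + s *\<^sub>R a) - dir_deriv f a (x + s *\<^sub>R a)) (at s)"
      unfolding G_def by (intro derivative_intros has_real_derivative_line f)
    then show ?thesis
      by (auto simp: has_field_derivative_def intro: has_derivative_at_withinI)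
  qed
  from mvt_simple[OF h this] obtain \<xi> where \<xi>: "\<xi> \<in> {0<..<h}"
    and G: "G h - G 0 = (dir_deriv f a ((x + h *\<^sub>R b) + \<xi> *\<^sub>R a) - dir_deriv f a (x + \<xi> *\<^sub>R a)) * h"
    by auto
  define H where "H t = dir_deriv f a ((x + \<xi> *\<^sub>R a) + t *\<^sub>R b)" for t
  have "(H has_derivative (\<lambda>t. dir_deriv (dir_deriv f a) b ((x + \<xi> *\<^sub>R a) + s *\<^sub>R b) * t))
      (at s within {0..h})" if "0 \<le> s" "s \<le> h" for s
  proof -
    have "(H has_real_derivative dir_deriv (dir_deriv f a) b ((x + \<xi> *\<^sub>R a) + s *\<^sub>R b)) (at s)"
      unfolding H_def using S[of \<xi> s] that \<xi> by (intro has_real_derivative_line fa) auto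
    then show ?thesis
      by (auto simp: has_field_derivative_def intro: has_derivative_at_withinI)
  qed
  from mvt_simple[OF h this] obtain \<eta> where \<eta>: "\<eta> \<in> {0<..<h}"
    and H: "H h - H 0 = dir_deriv (dir_deriv f a) b ((x + \<xi> *\<^sub>R a) + \<eta> *\<^sub>R b) * h"
    by auto
  have "f (x + h *\<^sub>R a + h *\<^sub>R b) - f (x + h *\<^sub>R a) - f (x + h *\<^sub>R b) + f x = G h - G 0"
    unfolding G_def by (simp add: add_ac)
  also have "\<dots> = (H h - H 0) * h"
    unfolding G H_def by (simp add: add_ac)
  also have "\<dots> = h\<^sup>2 * dir_deriv (dir_deriv f a) b (x + \<xi> *\<^sub>R a + \<eta> *\<^sub>R b)"
    unfolding H by (simp add: power2_eq_square)
  finally show ?thesis using \<xi> \<eta> that by blast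
qed

lemma norm_scaleR_add_lt:
  fixes a b :: "'a::real_normed_vector"
  assumes "\<delta> > 0" "s \<in> {0..\<delta> / (norm a + norm b + 1)}" "t \<in> {0..\<delta> / (norm a + norm b + 1)}"
  shows "norm (s *\<^sub>R a + t *\<^sub>R b) < \<delta>"
proof -
  define h where "h = \<delta> / (norm a + norm b + 1)"
  have M: "norm a + norm b + 1 > 0"
    using norm_ge_zero[of a] norm_ge_zero[of b] by linarith
  have h: "h > 0"
    using assms(1) M by (simp add: h_def)
  have "norm (s *\<^sub>R a + t *\<^sub>R b) \<le> h * norm a + h * norm b"
    using assms norm_triangle_ineq[of "s *\<^sub>R a" "t *\<^sub>R b"]
      mult_right_mono[of s h "norm a"] mult_right_mono[of t h "norm b"]
    by (simp add: h_def)
  also have "\<dots> < h * (norm a + norm b + 1)"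
    using h by (simp add: algebra_simps)
  also have "\<dots> = \<delta>"
    using M by (simp add: h_def)
  finally show ?thesis .
qed

lemma second_difference_quotient_tendsto:
  fixes f :: "'a::real_normed_vector \<Rightarrow> real"
  assumes S: "open S" "x \<in> S" and f: "C1_on S f" and fa: "C1_on S (dir_deriv f a)"
  shows "((\<lambda>h. (f (x + h *\<^sub>R a + h *\<^sub>R b) - f (x + h *\<^sub>R a) - f (x + h *\<^sub>R b) + f x) / h\<^sup>2)
    \<longlongrightarrow> dir_deriv (dir_deriv f a) b x) (at_right 0)"
proof (rule tendstoI)
  let ?A = "dir_deriv (dir_deriv f a) b"
  fix e :: real
  assume e: "e > 0"
  obtain r where r: "r > 0" "ball x r \<subseteq> S" using S open_contains_ball by blast
  obtain d1 where d1: "d1 > 0" "\<And>y. y \<in> S \<Longrightarrow> dist y x < d1 \<Longrightarrow> dist (?A y) (?A x) < e"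
    using C1_on_continuous_dir_deriv[OF fa] S(2) e unfolding continuous_on_iff by metis
  define \<delta> where "\<delta> = min r d1"
  define h0 where "h0 = \<delta> / (norm a + norm b + 1)"
  have "h0 > 0" using r d1 by (simp add: h0_def \<delta>_def add_nonneg_pos)
  moreover have "dist ((f (x + h *\<^sub>R a + h *\<^sub>R b) - f (x + h *\<^sub>R a) - f (x + h *\<^sub>R b) + f x) / h\<^sup>2) (?A x) < e"
    if h: "0 < h" "h < h0" for h
  proof -
    have near: "x + s *\<^sub>R a + t *\<^sub>R b \<in> S \<and> dist (x + s *\<^sub>R a + t *\<^sub>R b) x < \<delta>"
      if "s \<in> {0..h}" "t \<in> {0..h}" for s t
    proof -
      have "norm (s *\<^sub>R a + t *\<^sub>R b) < \<delta>"
        using that h r d1 by (intro norm_scaleR_add_lt) (auto simp: h0_def \<delta>_def)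
      then have "x + s *\<^sub>R a + t *\<^sub>R b \<in> ball x \<delta>"
        by (simp add: dist_norm add.assoc norm_minus_commute add.commute)
      moreover have "ball x \<delta> \<subseteq> S"
        using r by (auto simp: \<delta>_def)
      ultimately show ?thesis
        by (auto simp: dist_commute)
    qed
    obtain \<xi> \<eta> where "\<xi> \<in> {0<..<h}" "\<eta> \<in> {0<..<h}" and
      "f (x + h *\<^sub>R a + h *\<^sub>R b) - f (x + h *\<^sub>R a) - f (x + h *\<^sub>R b) + f x
        = h\<^sup>2 * ?A (x + \<xi> *\<^sub>R a + \<eta> *\<^sub>R b)"
      using second_difference_mvt[OF h(1), of x a b S f] near f fa C1_on_differentiable by blast
    with h(1) near[of \<xi> \<eta>] show ?thesis
      by (simp add: \<delta>_def d1(2))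
  qed
  ultimately show "\<forall>\<^sub>F h in at_right 0.
      dist ((f (x + h *\<^sub>R a + h *\<^sub>R b) - f (x + h *\<^sub>R a) - f (x + h *\<^sub>R b) + f x) / h\<^sup>2) (?A x) < e"
    unfolding eventually_at_right_field by blast
qed

text \<open>Schwarz: the second difference quotient is symmetric in \<open>a\<close> and \<open>b\<close>.\<close>

lemma dir_deriv_commute:
  fixes f :: "'a::real_normed_vector \<Rightarrow> real"
  assumes S: "open S" "x \<in> S"
    and f: "C1_on S f" and fa: "C1_on S (dir_deriv f a)" and fb: "C1_on S (dir_deriv f b)"
  shows "dir_deriv (dir_deriv f a) b x = dir_deriv (dir_deriv f b) a x"
proof (rule tendsto_unique[OF trivial_limit_at_right_real])
  show "((\<lambda>h. (f (x + h *\<^sub>R a + h *\<^sub>R b) - f (x + h *\<^sub>R a) - f (x + h *\<^sub>R b) + f x) / h\<^sup>2)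
    \<longlongrightarrow> dir_deriv (dir_deriv f a) b x) (at_right 0)"
    by (rule second_difference_quotient_tendsto[OF S f fa])
  show "((\<lambda>h. (f (x + h *\<^sub>R a + h *\<^sub>R b) - f (x + h *\<^sub>R a) - f (x + h *\<^sub>R b) + f x) / h\<^sup>2)
    \<longlongrightarrow> dir_deriv (dir_deriv f b) a x) (at_right 0)"
    using second_difference_quotient_tendsto[OF S f fb, of a] by (simp add: algebra_simps)
qed

section \<open>Integrals of derivatives of compactly supported functions\<close>

lemma dir_deriv_eq_0_on_open:
  assumes "open U" "x \<in> U" "\<And>y. y \<in> U \<Longrightarrow> g y = 0"
  shows "dir_deriv g v x = 0"
proof -
  have "(g has_derivative (\<lambda>h. 0)) (at x)"
    using has_derivative_transform_within_open[OF has_derivative_const[of 0] assms(1,2)] assms(3)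
    by auto
  then show ?thesis by (simp add: dir_deriv_eq)
qed

lemma has_integral_shift_compact_support:
  fixes g :: "'a::euclidean_space \<Rightarrow> 'b::banach"
  assumes "(g has_integral I) UNIV" and "\<And>x. x \<notin> K \<Longrightarrow> g x = 0"
    and "K \<subseteq> cbox (a + c) (b + c)"
  shows "((\<lambda>x. g (x + c)) has_integral I) (cbox a b)"
proof -
  have "((\<lambda>x. if x \<in> cbox (a + c) (b + c) then g x else 0) has_integral I) UNIV"
    using assms(1) by (rule has_integral_cong[THEN iffD1, rotated]) (use assms(2,3) in auto)
  then have "(g has_integral I) (cbox (a + c) (b + c))"
    by (simp add: has_integral_restrict_UNIV)
  then have "((g \<circ> (+) c) has_integral I) (cbox a b)"
    by (simp add: has_integral_shift_cbox_iff)
  then show ?thesis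
    by (simp add: o_def add.commute)
qed

lemma integrable_compact_support:
  fixes f :: "'a::euclidean_space \<Rightarrow> real"
  assumes "continuous_on UNIV f" "compact K" "\<And>x. x \<notin> K \<Longrightarrow> f x = 0"
  shows "f integrable_on UNIV"
proof -
  obtain a where a: "K \<subseteq> cbox (-a) a"
    using bounded_subset_cbox_symmetric[OF compact_imp_bounded[OF assms(2)]] by blast
  have "f integrable_on cbox (-a) a"
    by (rule integrable_continuous[OF continuous_on_subset[OF assms(1)]]) auto
  then have "(f has_integral integral (cbox (-a) a) f) UNIV"
    by (intro has_integral_on_superset[OF integrable_integral]) (use a assms(3) in auto)
  then show ?thesis by blast
qed

lemma compact_subset_shifted_cboxes:
  fixes K :: "'a::euclidean_space set"
  assumes "compact K"
  obtains a where "\<And>s. \<bar>s\<bar> \<le> 1 \<Longrightarrow> K \<subseteq> cbox (- a + s *\<^sub>R b) (a + s *\<^sub>R b)"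
proof -
  have "compact (\<Union>x\<in>K. \<Union>y\<in>(\<lambda>s. s *\<^sub>R b) ` {-1..1}. {x - y})"
    by (intro compact_differences' assms compact_continuous_image continuous_intros) auto
  then obtain a where a: "(\<Union>x\<in>K. \<Union>y\<in>(\<lambda>s. s *\<^sub>R b) ` {-1..1}. {x - y}) \<subseteq> cbox (-a) a"
    using bounded_subset_cbox_symmetric[OF compact_imp_bounded] by blast
  have "K \<subseteq> cbox (- a + s *\<^sub>R b) (a + s *\<^sub>R b)" if "\<bar>s\<bar> \<le> 1" for s
  proof
    fix x assume "x \<in> K"
    then have "x - s *\<^sub>R b \<in> cbox (-a) a"
      using that by (intro subsetD[OF a]) (auto simp: abs_le_iff intro!: bexI[of _ x] bexI[of _ s])
    then show "x \<in> cbox (- a + s *\<^sub>R b) (a + s *\<^sub>R b)"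
      by (auto simp: mem_box inner_add_left inner_diff_left algebra_simps)
  qed
  then show ?thesis by (rule that)
qed

lemma has_vector_derivative_integral_shift:
  fixes g :: "'a::euclidean_space \<Rightarrow> real"
  assumes g: "C1_on UNIV g"
  shows "((\<lambda>s. integral (cbox c e) (\<lambda>x. g (x + s *\<^sub>R b))) has_vector_derivative
      integral (cbox c e) (dir_deriv g b)) (at 0)"
proof -
  have "((\<lambda>s. integral (cbox c e) (\<lambda>x. g (x + s *\<^sub>R b))) has_vector_derivative
      integral (cbox c e) (\<lambda>x. dir_deriv g b (x + 0 *\<^sub>R b))) (at 0 within ball 0 1)"
  proof (rule leibniz_rule_vector_derivative)
    fix s :: real and x :: 'a
    show "((\<lambda>s. g (x + s *\<^sub>R b)) has_vector_derivative dir_deriv g b (x + s *\<^sub>R b))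
        (at s within ball 0 1)"
      using has_real_derivative_line[OF C1_on_differentiable[OF g]]
      by (auto simp: has_real_derivative_iff_has_vector_derivative intro: has_vector_derivative_at_within)
  next
    fix s :: real
    show "(\<lambda>x. g (x + s *\<^sub>R b)) integrable_on cbox c e"
      by (intro integrable_continuous continuous_on_compose2[OF C1_on_imp_continuous_on[OF g]]
          continuous_intros) auto
  next
    have "continuous_on (ball 0 1 \<times> cbox c e) (\<lambda>p. dir_deriv g b (snd p + fst p *\<^sub>R b))"
      by (intro continuous_on_compose2[OF C1_on_continuous_dir_deriv[OF g]] continuous_intros) auto
    then show "continuous_on (ball 0 1 \<times> cbox c e) (\<lambda>(s, x). dir_deriv g b (x + s *\<^sub>R b))"
      by (simp add: case_prod_beta)
  qed auto
  then show ?thesis by (simp add: at_within_open[of 0 "ball 0 1"])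
qed

text \<open>The integral of a translate of \<open>g\<close> does not depend on the translation; differentiate it
  under the integral sign.\<close>

lemma has_integral_dir_deriv_compact_support:
  fixes g :: "'a::euclidean_space \<Rightarrow> real"
  assumes g: "C1_on UNIV g" and K: "compact K" and g0: "\<And>x. x \<notin> K \<Longrightarrow> g x = 0"
  shows "(dir_deriv g b has_integral 0) UNIV"
proof -
  obtain a where K_box: "\<And>s. \<bar>s\<bar> \<le> 1 \<Longrightarrow> K \<subseteq> cbox (- a + s *\<^sub>R b) (a + s *\<^sub>R b)"
    using compact_subset_shifted_cboxes[OF K] by blast
  have g_int: "(g has_integral integral UNIV g) UNIV"
    by (intro integrable_integral integrable_compact_support[OF C1_on_imp_continuous_on[OF g] K g0])
  define F where "F s = integral (cbox (-a) a) (\<lambda>x. g (x + s *\<^sub>R b))" for s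
  have F_const: "F s = integral UNIV g" if "s \<in> ball 0 1" for s
  proof -
    have "\<bar>s\<bar> \<le> 1" using that by simp
    from has_integral_shift_compact_support[OF g_int g0 K_box[OF this]]
    show ?thesis unfolding F_def by (rule integral_unique)
  qed
  have "(F has_vector_derivative 0) (at 0)"
    by (rule has_vector_derivative_transform_within_open[OF
          has_vector_derivative_const[of "integral UNIV g"], of "ball 0 1"]) (auto simp: F_const)
  with has_vector_derivative_integral_shift[OF g] have "integral (cbox (-a) a) (dir_deriv g b) = 0"
    unfolding F_def using vector_derivative_unique_at by blast
  then have "(dir_deriv g b has_integral 0) (cbox (-a) a)"
    using integrable_continuous[OF continuous_on_subset[OF C1_on_continuous_dir_deriv[OF g]]]
    by (metis has_integral_integral subset_UNIV)
  moreover have "dir_deriv g b x = 0" if "x \<notin> cbox (-a) a" for x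
    using K_box[of 0] that compact_imp_closed[OF K] g0
    by (intro dir_deriv_eq_0_on_open[of "- K"]) (auto simp: open_Compl)
  ultimately show ?thesis
    by (rule has_integral_on_superset) auto
qed

section \<open>Coordinates and horizontal vector fields\<close>

lemma zvec_in_Basis: "zvec j i k \<in> (Basis :: ('n::finite,'N::finite) grp set)"
proof -
  have "zvec j i k = (axis j (axis i (axis k 1)), 0)"
    unfolding zvec_def by (auto simp: vec_eq_iff axis_def)
  then show ?thesis by (auto simp: Basis_prod_def axis_in_Basis_iff)
qed

lemma tvec_in_Basis: "tvec j \<in> (Basis :: ('n::finite,'N::finite) grp set)"
  unfolding tvec_def Basis_prod_def by (auto simp: axis_in_Basis_iff)

lemma zvec_component [simp]:
  "fst (zvec j i k) $ j' $ i' $ k' = of_bool (j' = j \<and> i' = i \<and> k' = k)"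
  "snd (zvec j i k) = 0"
  unfolding zvec_def by auto

lemma tvec_component [simp]: "fst (tvec j) = 0" "snd (tvec j) $ j' = of_bool (j' = j)"
  unfolding tvec_def by (auto simp: axis_def)

definition zcoord :: "'N \<Rightarrow> 'n \<Rightarrow> 2 \<Rightarrow> ('n::finite,'N::finite) grp \<Rightarrow> real" where
  "zcoord j i k x = fst x $ j $ i $ k"

definition tcoord :: "'N \<Rightarrow> ('n::finite,'N::finite) grp \<Rightarrow> real" where
  "tcoord j x = snd x $ j"

lemma bounded_linear_zcoord: "bounded_linear (zcoord j i k)"
  unfolding zcoord_def[abs_def]
  by (intro bounded_linear_compose[OF bounded_linear_vec_nth] bounded_linear_fst)

lemma bounded_linear_tcoord: "bounded_linear (tcoord j)"
  unfolding tcoord_def[abs_def]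
  by (intro bounded_linear_compose[OF bounded_linear_vec_nth] bounded_linear_snd)

lemma differentiable_zcoord [simp]: "zcoord j i k differentiable (at x)"
  using bounded_linear_zcoord bounded_linear_imp_differentiable by blast

lemma differentiable_tcoord [simp]: "tcoord j differentiable (at x)"
  using bounded_linear_tcoord bounded_linear_imp_differentiable by blast

lemma grp_fst_expansion:
  "(fst x, 0) = (\<Sum>j\<in>UNIV. \<Sum>i\<in>UNIV. \<Sum>k\<in>UNIV. zcoord j i k x *\<^sub>R zvec j i k)"
  by (simp add: prod_eq_iff vec_eq_iff fst_sum snd_sum sum_component zcoord_def
      of_bool_conj mult.assoc[symmetric] sum_distrib_right[symmetric])

lemma grp_snd_expansion: "(0, snd x) = (\<Sum>j\<in>UNIV. tcoord j x *\<^sub>R tvec j)"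
  by (simp add: prod_eq_iff vec_eq_iff fst_sum snd_sum sum_component tcoord_def)

lemma homogeneous_euler:
  fixes f :: "('n::finite,'N::finite) grp \<Rightarrow> real"
  assumes f: "f differentiable (at x)" and hom: "\<And>r. r > 0 \<Longrightarrow> f (dil r x) = r * f x"
  shows "(\<Sum>j\<in>UNIV. \<Sum>i\<in>UNIV. \<Sum>k\<in>UNIV. zcoord j i k x * dir_deriv f (zvec j i k) x)
      + 2 * (\<Sum>j\<in>UNIV. tcoord j x * dir_deriv f (tvec j) x) = f x"
proof -
  have l: "linear (\<lambda>v. dir_deriv f v x)" using f by (rule linear_dir_deriv)
  have "((\<lambda>r. dil r x) has_derivative (\<lambda>h. h *\<^sub>R (fst x, 2 *\<^sub>R snd x))) (at 1)"
    unfolding dil_def by (auto intro!: derivative_eq_intros simp: prod_eq_iff)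
  from has_derivative_compose[OF this, of f] have D1:
    "((\<lambda>r. f (dil r x)) has_derivative (\<lambda>h. dir_deriv f (h *\<^sub>R (fst x, 2 *\<^sub>R snd x)) x)) (at 1)"
    using has_derivative_dir_deriv[OF f] by (simp add: dil_def o_def)
  have "((\<lambda>r. r * f x) has_derivative (\<lambda>h. h * f x)) (at 1)"
    by (auto intro!: derivative_eq_intros)
  then have D2: "((\<lambda>r. f (dil r x)) has_derivative (\<lambda>h. h * f x)) (at 1)"
    by (rule has_derivative_transform_within_open[where s="{0<..}"]) (auto simp: hom)
  from fun_cong[OF has_derivative_unique[OF D1 D2], of 1]
  have "dir_deriv f (fst x, 2 *\<^sub>R snd x) x = f x" by simp
  moreover have "(fst x, 2 *\<^sub>R snd x) = (fst x, 0) + 2 *\<^sub>R (0, snd x)" by simp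
  ultimately show ?thesis
    unfolding grp_fst_expansion grp_snd_expansion
    by (simp add: linear_add[OF l] linear_sum[OF l] linear_scale[OF l])
qed

definition Xcoef :: "'N \<Rightarrow> 'n \<Rightarrow> 2 \<Rightarrow> ('n::finite,'N::finite) grp \<Rightarrow> real" where
  "Xcoef j i k x = (if k = 1 then 2 * zcoord j i 2 x else - 2 * zcoord j i 1 x)"

lemma Xf_eq: "Xf j i k f x = dir_deriv f (zvec j i k) x + Xcoef j i k x * dir_deriv f (tvec j) x"
  by (simp add: Xf_def dir_deriv_def Xcoef_def zcoord_def)

lemma differentiable_Xcoef [simp]: "Xcoef j i k differentiable (at x)"
  unfolding Xcoef_def[abs_def] by (cases "k = 1") (auto intro!: differentiable_mult)

lemma C1_on_zcoord: "C1_on S (zcoord j i k)"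
  by (rule C1_on_linear[OF bounded_linear_zcoord])

lemma C1_on_tcoord: "C1_on S (tcoord j)"
  by (rule C1_on_linear[OF bounded_linear_tcoord])

lemma C1_on_Xcoef: "C1_on S (Xcoef j i k)"
  unfolding Xcoef_def[abs_def]
  by (cases "k = 1") (auto intro!: C1_on_mult C1_on_const C1_on_zcoord C1_on_minus)

lemma C1_on_Xf:
  "C1_on S (dir_deriv f (zvec j i k)) \<Longrightarrow> C1_on S (dir_deriv f (tvec j)) \<Longrightarrow> C1_on S (Xf j i k f)"
  unfolding Xf_eq[abs_def] by (intro C1_on_add C1_on_mult C1_on_Xcoef)

lemma Xf_add:
  "f differentiable (at x) \<Longrightarrow> g differentiable (at x) \<Longrightarrow>
    Xf j i k (\<lambda>y. f y + g y) x = Xf j i k f x + Xf j i k g x"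
  by (simp add: Xf_eq dir_deriv_add algebra_simps)

lemma Xf_diff:
  "f differentiable (at x) \<Longrightarrow> g differentiable (at x) \<Longrightarrow>
    Xf j i k (\<lambda>y. f y - g y) x = Xf j i k f x - Xf j i k g x"
  by (simp add: Xf_eq dir_deriv_diff algebra_simps)

lemma Xf_mult:
  "f differentiable (at x) \<Longrightarrow> g differentiable (at x) \<Longrightarrow>
    Xf j i k (\<lambda>y. f y * g y) x = f x * Xf j i k g x + Xf j i k f x * g x"
  by (simp add: Xf_eq dir_deriv_mult algebra_simps)

lemma Xf_cmult: "f differentiable (at x) \<Longrightarrow> Xf j i k (\<lambda>y. c * f y) x = c * Xf j i k f x"
  by (simp add: Xf_eq dir_deriv_cmult algebra_simps)

lemma Xf_const: "Xf j i k (\<lambda>y. c) x = 0"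
  by (simp add: Xf_eq dir_deriv_const)

lemma Xf_minus: "f differentiable (at x) \<Longrightarrow> Xf j i k (\<lambda>y. - f y) x = - Xf j i k f x"
  by (simp add: Xf_eq dir_deriv_minus)

lemma Xf_real_compose:
  "(h has_real_derivative h') (at (f x)) \<Longrightarrow> f differentiable (at x) \<Longrightarrow>
    Xf j i k (\<lambda>y. h (f y)) x = h' * Xf j i k f x"
  by (simp add: Xf_eq dir_deriv_real_compose algebra_simps)

lemma Xf_zcoord: "Xf j i k (zcoord j' i' k') x = of_bool (j' = j \<and> i' = i \<and> k' = k)"
  by (simp add: Xf_eq dir_deriv_linear[OF bounded_linear_zcoord]) (simp add: zcoord_def)

lemma Xf_tcoord: "Xf j i k (tcoord j') x = of_bool (j' = j) * Xcoef j i k x"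
  by (simp add: Xf_eq dir_deriv_linear[OF bounded_linear_tcoord]) (simp add: tcoord_def)

lemma Xf_eq_0_on_open:
  "open U \<Longrightarrow> x \<in> U \<Longrightarrow> (\<And>y. y \<in> U \<Longrightarrow> g y = 0) \<Longrightarrow> Xf j i k g x = 0"
  by (simp add: Xf_eq dir_deriv_eq_0_on_open)

text \<open>The coefficient of \<open>\<partial>\<^sub>t\<close> in \<open>X\<close> does not depend on \<open>t\<close>, so \<open>X\<close> is a divergence
  and integrates to zero against compactly supported functions.\<close>

lemma has_integral_Xf_compact_support:
  fixes g :: "('n::finite,'N::finite) grp \<Rightarrow> real"
  assumes g: "C1_on UNIV g" and K: "compact K" and g0: "\<And>x. x \<notin> K \<Longrightarrow> g x = 0"
  shows "(Xf j i k g has_integral 0) UNIV"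
proof -
  have "Xcoef j i k = (\<lambda>y. (if k = 1 then 2 else - 2) * zcoord j i (if k = 1 then 2 else 1) y)"
    by (simp add: fun_eq_iff Xcoef_def)
  then have Xcoef_t: "dir_deriv (Xcoef j i k) (tvec j) x = 0" for x
    by (simp add: dir_deriv_cmult dir_deriv_linear[OF bounded_linear_zcoord]) (simp add: zcoord_def)
  have eq: "Xf j i k g = (\<lambda>x. dir_deriv g (zvec j i k) x + dir_deriv (\<lambda>y. Xcoef j i k y * g y) (tvec j) x)"
    using C1_on_differentiable[OF g] by (simp add: fun_eq_iff Xf_eq dir_deriv_mult Xcoef_t)
  have i1: "(dir_deriv g (zvec j i k) has_integral 0) UNIV"
    by (rule has_integral_dir_deriv_compact_support[OF g K g0])
  have i2: "(dir_deriv (\<lambda>y. Xcoef j i k y * g y) (tvec j) has_integral 0) UNIV"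
    by (rule has_integral_dir_deriv_compact_support[OF C1_on_mult[OF C1_on_Xcoef g] K]) (simp add: g0)
  show ?thesis
    unfolding eq using has_integral_add[OF i1 i2] by simp
qed

lemma Xf_commutator:
  assumes S: "open S" "x \<in> S" and f: "C1_on S f" and f': "\<And>b. b \<in> Basis \<Longrightarrow> C1_on S (dir_deriv f b)"
  shows "Xf j i 2 (Xf j i 1 f) x - Xf j i 1 (Xf j i 2 f) x = 4 * dir_deriv f (tvec j) x"
proof -
  let ?z1 = "zvec j i 1" and ?z2 = "zvec j i 2" and ?t = "tvec j"
  have D: "dir_deriv f ?z1 differentiable (at x)" "dir_deriv f ?z2 differentiable (at x)"
    "dir_deriv f ?t differentiable (at x)"
    using C1_on_differentiable[OF f' S(2)] zvec_in_Basis tvec_in_Basis by blast+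
  have swap: "dir_deriv (dir_deriv f a) b x = dir_deriv (dir_deriv f b) a x" if "a \<in> Basis" "b \<in> Basis" for a b
    using dir_deriv_commute[OF S f f' f'] that .
  have X1: "Xf j i 1 f = (\<lambda>y. dir_deriv f ?z1 y + 2 * zcoord j i 2 y * dir_deriv f ?t y)"
    and X2: "Xf j i 2 f = (\<lambda>y. dir_deriv f ?z2 y - 2 * zcoord j i 1 y * dir_deriv f ?t y)"
    by (simp_all add: fun_eq_iff Xf_eq Xcoef_def)
  have XX1: "Xf j i 2 (Xf j i 1 f) x
      = Xf j i 2 (dir_deriv f ?z1) x + (2 * zcoord j i 2 x * Xf j i 2 (dir_deriv f ?t) x + 2 * dir_deriv f ?t x)"
    unfolding X1 using D by (simp add: Xf_add Xf_mult Xf_cmult Xf_zcoord Xf_const differentiable_mult)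
  have XX2: "Xf j i 1 (Xf j i 2 f) x
      = Xf j i 1 (dir_deriv f ?z2) x - (2 * zcoord j i 1 x * Xf j i 1 (dir_deriv f ?t) x + 2 * dir_deriv f ?t x)"
    unfolding X2 using D by (simp add: Xf_diff Xf_mult Xf_cmult Xf_zcoord Xf_const differentiable_mult)
  show ?thesis
    unfolding XX1 XX2
    using swap[OF zvec_in_Basis zvec_in_Basis, of j i 1 j i 2]
      swap[OF zvec_in_Basis tvec_in_Basis, of j i 1 j] swap[OF zvec_in_Basis tvec_in_Basis, of j i 2 j]
    by (simp add: Xf_eq Xcoef_def algebra_simps)
qed

section \<open>The divergence of the weighted field \<open>d\<^sup>1\<^sup>-\<^sup>p\<^sup>\<theta> Z\<^sub>d\<close>\<close>

definition hperp_comp :: "(('n::finite,'N::finite) grp \<Rightarrow> real) \<Rightarrow> 'N \<Rightarrow> 'n \<Rightarrow> 2 \<Rightarrow> ('n,'N) grp \<Rightarrow> real" where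
  "hperp_comp d j i k x = (if k = 1 then - Xf j i 2 d x else Xf j i 1 d x)"

lemma Zfield_component:
  fixes d :: "('n::finite,'N::finite) grp \<Rightarrow> real"
  shows "Zfield p \<theta> d x $ j $ i $ k =
    (real CARD('n) + 1) / real CARD('n) * (zcoord j i k x / d x)
    - p * \<theta> / (2 * real CARD('n)) * (tcoord j x * hperp_comp d j i k x / (d x)\<^sup>2)"
proof -
  have "hperp j' d x $ j $ i $ k = hperp_comp d j i k x * of_bool (j' = j)" for j'
    by (simp add: hperp_def hperp_comp_def)
  then have "(\<Sum>j'\<in>UNIV. snd x $ j' *\<^sub>R hperp j' d x) $ j $ i $ k
      = (\<Sum>j'\<in>UNIV. snd x $ j' * hperp_comp d j i k x * of_bool (j' = j))"
    by (simp add: sum_component mult.assoc)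
  also have "\<dots> = tcoord j x * hperp_comp d j i k x"
    by (simp add: tcoord_def)
  finally show ?thesis
    by (simp add: Zfield_def zcoord_def)
qed

definition weighted_Z :: "real \<Rightarrow> (('n::finite,'N::finite) grp \<Rightarrow> real) \<Rightarrow> 'N \<Rightarrow> 'n \<Rightarrow> 2 \<Rightarrow> ('n,'N) grp \<Rightarrow> real" where
  "weighted_Z a d j i k x =
     (real CARD('n) + 1) / real CARD('n) * (d x powr (- a) * zcoord j i k x)
     - a / (2 * real CARD('n)) * (d x powr (- 1 - a) * (tcoord j x * hperp_comp d j i k x))"

lemma weighted_Z_eq_Zfield:
  assumes "d x > 0"
  shows "weighted_Z (p * \<theta>) d j i k x = d x powr (1 - p * \<theta>) * Zfield p \<theta> d x $ j $ i $ k"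
proof -
  have "d x powr (1 - p * \<theta>) = d x powr (- (p * \<theta>)) * d x powr 1"
    "d x powr (1 - p * \<theta>) = d x powr (- 1 - p * \<theta>) * d x powr 2"
    by (simp_all only: powr_add[symmetric]) simp_all
  then have "d x powr (- (p * \<theta>)) = d x powr (1 - p * \<theta>) / d x"
    "d x powr (- 1 - p * \<theta>) = d x powr (1 - p * \<theta>) / (d x)\<^sup>2"
    using assms by (simp_all add: field_simps)
  then show ?thesis
    unfolding weighted_Z_def Zfield_component by (simp add: algebra_simps)
qed

locale smooth_gauge =
  fixes d :: "('n::finite,'N::finite) grp \<Rightarrow> real"
  assumes pos: "x \<noteq> 0 \<Longrightarrow> d x > 0"
    and homogeneous: "r > 0 \<Longrightarrow> d (dil r x) = r * d x"
    and C1: "C1_on (- {0}) d"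
    and C2: "b \<in> Basis \<Longrightarrow> C1_on (- {0}) (dir_deriv d b)"
begin

lemma differentiable: "x \<noteq> 0 \<Longrightarrow> d differentiable (at x)"
  using C1_on_differentiable[OF C1] by simp

lemma continuous_on_d: "continuous_on (- {0}) d"
  by (rule C1_on_imp_continuous_on[OF C1])

lemma d_nonzero: "\<forall>x\<in>- {0}. d x \<noteq> 0"
  using pos by force

lemma C1_on_powr: "C1_on (- {0}) (\<lambda>y. d y powr q)"
proof (rule C1_on_real_compose[OF C1])
  show "((\<lambda>s. s powr q) has_real_derivative q * d x powr (q - 1)) (at (d x))" if "x \<in> - {0}" for x
    using has_real_derivative_powr[OF pos] that by auto
  have "0 \<notin> d ` (- {0})"
    using pos by force
  then show "continuous_on (d ` (- {0})) (\<lambda>s. q * s powr (q - 1))"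
    by (intro continuous_intros) auto
qed

lemma Xf_powr: "x \<noteq> 0 \<Longrightarrow> Xf j i k (\<lambda>y. d y powr q) x = q * d x powr (q - 1) * Xf j i k d x"
  by (rule Xf_real_compose[OF has_real_derivative_powr[OF pos] differentiable])

lemma C1_on_Xf_d: "C1_on (- {0}) (Xf j i k d)"
  by (intro C1_on_Xf C2 zvec_in_Basis tvec_in_Basis)

lemma C1_on_hperp_comp: "C1_on (- {0}) (hperp_comp d j i k)"
  unfolding hperp_comp_def[abs_def] by (cases "k = 1") (simp_all add: C1_on_minus C1_on_Xf_d)

lemma C1_on_weighted_Z: "C1_on (- {0}) (weighted_Z a d j i k)"
  unfolding weighted_Z_def[abs_def]
  by (intro C1_on_diff C1_on_mult C1_on_const C1_on_powr C1_on_zcoord C1_on_tcoord C1_on_hperp_comp)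

lemma Xf_weighted_Z:
  assumes x: "x \<noteq> 0"
  shows "Xf j i k (weighted_Z a d j i k) x =
    (real CARD('n) + 1) / real CARD('n) * (d x powr (- a) - a * d x powr (- a - 1) * Xf j i k d x * zcoord j i k x)
    - a / (2 * real CARD('n)) * ((- 1 - a) * d x powr (- 1 - a - 1) * Xf j i k d x * (tcoord j x * hperp_comp d j i k x)
        + d x powr (- 1 - a) * (Xcoef j i k x * hperp_comp d j i k x + tcoord j x * Xf j i k (hperp_comp d j i k) x))"
proof -
  let ?A = "\<lambda>y. d y powr (- a) * zcoord j i k y"
  let ?B = "\<lambda>y. d y powr (- 1 - a) * (tcoord j y * hperp_comp d j i k y)"
  have D: "(\<lambda>y. d y powr q) differentiable (at x)" "hperp_comp d j i k differentiable (at x)" for q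
    using x C1_on_differentiable[OF C1_on_powr] C1_on_differentiable[OF C1_on_hperp_comp] by auto
  then have Dth: "(\<lambda>y. tcoord j y * hperp_comp d j i k y) differentiable (at x)"
    by (intro differentiable_mult) auto
  define c1 where "c1 = (real CARD('n) + 1) / real CARD('n)"
  define c2 where "c2 = a / (2 * real CARD('n))"
  have "weighted_Z a d j i k = (\<lambda>y. c1 * ?A y - c2 * ?B y)"
    by (simp add: fun_eq_iff weighted_Z_def c1_def c2_def)
  then have e1: "Xf j i k (weighted_Z a d j i k) x = c1 * Xf j i k ?A x - c2 * Xf j i k ?B x"
    using D Dth by (simp add: Xf_diff Xf_cmult)
  have e2: "Xf j i k ?A x = d x powr (- a) + - a * d x powr (- a - 1) * Xf j i k d x * zcoord j i k x"
    using D by (simp add: Xf_mult Xf_powr[OF x] Xf_zcoord)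
  have e3: "Xf j i k ?B x = d x powr (- 1 - a) * (tcoord j x * Xf j i k (hperp_comp d j i k) x
      + Xcoef j i k x * hperp_comp d j i k x)
      + (- 1 - a) * d x powr (- 1 - a - 1) * Xf j i k d x * (tcoord j x * hperp_comp d j i k x)"
    using D Dth by (simp add: Xf_mult Xf_powr[OF x] Xf_tcoord)
  show ?thesis
    unfolding e1 e2 e3 c1_def c2_def by (simp add: algebra_simps)
qed

lemma divergence_weighted_Z_pair:
  assumes x: "x \<noteq> 0"
  shows "Xf j i 1 (weighted_Z a d j i 1) x + Xf j i 2 (weighted_Z a d j i 2) x =
    2 * ((real CARD('n) + 1) / real CARD('n)) * d x powr (- a)
    - a * d x powr (- 1 - a) * (zcoord j i 1 x * dir_deriv d (zvec j i 1) x + zcoord j i 2 x * dir_deriv d (zvec j i 2) x)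
    - 2 * a / real CARD('n) * d x powr (- 1 - a) * tcoord j x * dir_deriv d (tvec j) x"
proof -
  define n where "n = real CARD('n)"
  have n: "n > 0" unfolding n_def by simp
  define z1 z2 where "z1 = zcoord j i 1 x" and "z2 = zcoord j i 2 x"
  define dz1 dz2 dt where "dz1 = dir_deriv d (zvec j i 1) x" and "dz2 = dir_deriv d (zvec j i 2) x"
    and "dt = dir_deriv d (tvec j) x"
  define C where "C = Xf j i 1 (Xf j i 2 d) x"
  have X1: "Xf j i 1 d x = dz1 + 2 * z2 * dt" and X2: "Xf j i 2 d x = dz2 - 2 * z1 * dt"
    by (simp_all add: Xf_eq Xcoef_def z1_def z2_def dz1_def dz2_def dt_def)
  have XP1: "Xf j i 1 (hperp_comp d j i 1) x = - C"
    unfolding C_def hperp_comp_def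
    using Xf_minus[OF C1_on_differentiable[OF C1_on_Xf_d]] x by simp
  have XP2: "Xf j i 2 (hperp_comp d j i 2) x = C + 4 * dt"
    using Xf_commutator[OF _ _ C1 C2, of x j i] x unfolding C_def dt_def hperp_comp_def
    by (simp add: open_Compl)
  have exp: "d x powr (- a - 1) = d x powr (- 1 - a)"
    by (rule arg_cong[where f = "\<lambda>u. d x powr u"]) simp
  show ?thesis
    unfolding Xf_weighted_Z[OF x] n_def[symmetric] exp XP1 XP2
    using n by (simp add: hperp_comp_def X1 X2 Xcoef_def z1_def[symmetric] z2_def[symmetric]
        dz1_def[symmetric] dz2_def[symmetric] dt_def[symmetric] field_simps)
qed

lemma divergence_weighted_Z:
  assumes x: "x \<noteq> 0"
  shows "(\<Sum>j\<in>UNIV. \<Sum>i\<in>UNIV. \<Sum>k\<in>UNIV. Xf j i k (weighted_Z a d j i k) x)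
    = (2 * real CARD('N) * (real CARD('n) + 1) - a) * d x powr (- a)"
proof -
  define n where "n = real CARD('n)"
  have n: "n > 0" unfolding n_def by simp
  define e g where "e = d x powr (- a)" and "g = d x powr (- 1 - a)"
  have ge: "g * d x = e"
  proof -
    have "g * d x = d x powr (- 1 - a) * d x powr 1"
      using pos[OF x] by (simp add: g_def)
    also have "\<dots> = d x powr (- 1 - a + 1)"
      by (simp only: powr_add)
    finally show ?thesis by (simp add: e_def)
  qed
  define S where "S j i = zcoord j i 1 x * dir_deriv d (zvec j i 1) x + zcoord j i 2 x * dir_deriv d (zvec j i 2) x" for j i
  define T where "T j = tcoord j x * dir_deriv d (tvec j) x" for j
  have euler: "(\<Sum>j\<in>UNIV. \<Sum>i\<in>UNIV. S j i) + 2 * (\<Sum>j\<in>UNIV. T j) = d x"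
    using homogeneous_euler[OF differentiable[OF x] homogeneous] unfolding S_def T_def by (simp add: sum_2)
  have "(\<Sum>j\<in>UNIV. \<Sum>i\<in>UNIV. \<Sum>k\<in>UNIV. Xf j i k (weighted_Z a d j i k) x)
      = (\<Sum>j\<in>UNIV. \<Sum>i\<in>UNIV. 2 * ((n + 1) / n) * e - a * g * S j i - (2 * a / n) * g * T j)"
    unfolding sum_2 divergence_weighted_Z_pair[OF x] n_def e_def g_def S_def T_def by (simp add: mult.assoc)
  also have "\<dots> = (\<Sum>j\<in>UNIV. n * (2 * ((n + 1) / n) * e) - a * g * (\<Sum>i\<in>UNIV. S j i)
      - n * ((2 * a / n) * g * T j))"
    by (simp add: sum_subtractf sum_distrib_left n_def)
  also have "\<dots> = (\<Sum>j\<in>UNIV. 2 * (n + 1) * e - a * g * (\<Sum>i\<in>UNIV. S j i) - 2 * a * g * T j)"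
    by (intro sum.cong refl) (use n in \<open>simp add: field_simps\<close>)
  also have "\<dots> = real CARD('N) * (2 * (n + 1) * e) - a * g * ((\<Sum>j\<in>UNIV. \<Sum>i\<in>UNIV. S j i) + 2 * (\<Sum>j\<in>UNIV. T j))"
    by (simp add: sum_subtractf sum_distrib_left sum_distrib_right sum.distrib algebra_simps)
  also have "\<dots> = (2 * real CARD('N) * (n + 1) - a) * e"
    unfolding euler using ge by (simp add: algebra_simps)
  finally show ?thesis unfolding n_def e_def .
qed

end

section \<open>The integral inequality\<close>

lemma has_real_derivative_abs_powr:
  fixes p s :: real
  assumes p: "p > 1"
  shows "((\<lambda>y. \<bar>y\<bar> powr p) has_real_derivative p * sgn s * \<bar>s\<bar> powr (p - 1)) (at s)"
proof -
  consider "s > 0" | "s < 0" | "s = 0" by linarith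
  then show ?thesis
  proof cases
    case 1
    have "((\<lambda>y. y powr p) has_real_derivative p * sgn s * \<bar>s\<bar> powr (p - 1)) (at s)"
      using has_real_derivative_powr[OF 1] 1 by simp
    then show ?thesis
      by (rule has_field_derivative_transform_within_open[where S="{0<..}"]) (use 1 in auto)
  next
    case 2
    have m: "((\<lambda>y. - y) has_real_derivative - 1) (at s)"
      by (auto intro!: derivative_eq_intros)
    have "((\<lambda>y. (- y) powr p) has_real_derivative p * (- s) powr (p - 1) * (- 1)) (at s)"
      using DERIV_chain2[OF has_real_derivative_powr[of "- s" p] m] 2 by simp
    then have "((\<lambda>y. (- y) powr p) has_real_derivative p * sgn s * \<bar>s\<bar> powr (p - 1)) (at s)"
      using 2 by simp
    then show ?thesis
      by (rule has_field_derivative_transform_within_open[where S="{..<0}"]) (use 2 in auto)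
  next
    case 3
    have "((\<lambda>y::real. \<bar>y\<bar> powr (p - 1)) \<longlongrightarrow> 0) (at 0)"
      using p by (intro tendsto_zero_powrI tendsto_rabs_zero tendsto_ident_at) auto
    moreover have "\<forall>\<^sub>F y in at 0. \<bar>y\<bar> powr (p - 1) = \<bar>(\<bar>y\<bar> powr p - \<bar>0::real\<bar> powr p) / (y - 0)\<bar>"
      unfolding eventually_at_filter by (intro always_eventually) (simp add: powr_diff)
    ultimately have "((\<lambda>y. \<bar>(\<bar>y\<bar> powr p - \<bar>0::real\<bar> powr p) / (y - 0)\<bar>) \<longlongrightarrow> 0) (at 0)"
      by (rule Lim_transform_eventually)
    then show ?thesis
      using 3 by (simp add: has_field_derivative_iff tendsto_rabs_zero_cancel del: diff_0_right)
  qed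
qed

lemma continuous_on_sgn_abs_powr:
  assumes p: "p > 1"
  shows "continuous_on UNIV (\<lambda>s::real. p * sgn s * \<bar>s\<bar> powr (p - 1))"
proof (rule continuous_at_imp_continuous_on, intro ballI)
  fix s :: real
  have "continuous_on UNIV (\<lambda>y::real. \<bar>y\<bar> powr (p - 1))"
    by (rule continuous_on_powr') (use p in \<open>auto intro: continuous_intros\<close>)
  then have c: "isCont (\<lambda>y::real. \<bar>y\<bar> powr (p - 1)) y" for y
    by (simp add: continuous_on_eq_continuous_at)
  show "isCont (\<lambda>s. p * sgn s * \<bar>s\<bar> powr (p - 1)) s"
  proof (cases "s = 0")
    case False
    have "isCont sgn s" by (rule isCont_sgn[OF continuous_ident]) (use False in auto)
    then show ?thesis by (intro isCont_mult c continuous_const)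
  next
    case True
    have "((\<lambda>y::real. \<bar>y\<bar> powr (p - 1)) \<longlongrightarrow> 0) (at 0)"
      using c[of 0] p by (simp add: isCont_def)
    then have "((\<lambda>y::real. p * \<bar>y\<bar> powr (p - 1)) \<longlongrightarrow> 0) (at 0)"
      using tendsto_mult_left[of _ 0 _ p] by simp
    moreover have "(\<lambda>y::real. \<bar>p * sgn y * \<bar>y\<bar> powr (p - 1)\<bar>) = (\<lambda>y. p * \<bar>y\<bar> powr (p - 1))"
      using p by (auto simp: fun_eq_iff abs_mult sgn_if)
    ultimately show ?thesis
      using True by (simp add: isCont_def tendsto_rabs_zero_cancel)
  qed
qed

lemma Youngs_inequality_weighted:
  fixes p \<mu> X Y :: real
  assumes p: "p > 1" and \<mu>: "\<mu> > 0" and X: "X \<ge> 0" and Y: "Y \<ge> 0"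
  shows "p * (X powr (p - 1) * Y) \<le> (p - 1) * \<mu> * X powr p + \<mu> powr (1 - p) * Y powr p"
proof (cases "X = 0 \<or> Y = 0")
  case True
  then show ?thesis using p \<mu> by auto
next
  case False
  then have X': "X > 0" and Y': "Y > 0" using X Y by auto
  have p0: "p \<noteq> 0" using p by simp
  have "(\<mu> * X powr p) powr ((p - 1) / p) = \<mu> powr ((p - 1) / p) * X powr (p - 1)"
    using \<mu> p0 by (simp add: powr_mult powr_powr)
  moreover have "(\<mu> powr (1 - p) * Y powr p) powr (1 / p) = \<mu> powr ((1 - p) / p) * Y"
    using \<mu> Y' p0 by (simp add: powr_mult powr_powr)
  moreover have "\<mu> powr ((p - 1) / p) * \<mu> powr ((1 - p) / p) = 1"
    using \<mu> by (simp add: powr_add[symmetric] add_divide_distrib[symmetric])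
  ultimately have "X powr (p - 1) * Y = (\<mu> * X powr p) powr ((p - 1) / p) * (\<mu> powr (1 - p) * Y powr p) powr (1 / p)"
    by (simp add: algebra_simps)
  also have "\<dots> \<le> (p - 1) / p * (\<mu> * X powr p) + 1 / p * (\<mu> powr (1 - p) * Y powr p)"
    using p \<mu> X' Y' by (intro Youngs_inequality_0) (auto simp: field_simps)
  finally show ?thesis
    using p by (simp add: field_simps)
qed

lemma nn_integral_lborel_eq_integral:
  fixes f :: "'a::euclidean_space \<Rightarrow> real"
  assumes "f integrable_on UNIV" and "\<And>x. f x \<ge> 0"
  shows "(\<integral>\<^sup>+ x. ennreal (f x) \<partial>lborel) = ennreal (integral UNIV f)"
  using nn_integral_has_integral_lebesgue'[OF _ integrable_integral[OF assms(1)]] assms(2) by simp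

lemma powr_le_if_weighted_bounds:
  fixes p c A B :: real
  assumes p: "p > 1" and c: "c \<ge> 0" and A: "A \<ge> 0" and B: "B \<ge> 0"
    and bound: "\<And>\<mu>. \<mu> > 0 \<Longrightarrow> p * c * A \<le> (p - 1) * \<mu> * A + \<mu> powr (1 - p) * B"
  shows "c powr p * A \<le> B"
proof (cases "c = 0")
  case True
  then show ?thesis using B by simp
next
  case False
  then have c': "c > 0" using c by simp
  text \<open>The bound is optimal for \<open>\<mu> = c\<close>.\<close>
  have "c * A \<le> c powr (1 - p) * B"
    using bound[OF c'] by (simp add: algebra_simps)
  then have "c powr (p - 1) * (c * A) \<le> c powr (p - 1) * (c powr (1 - p) * B)"
    by (rule mult_left_mono) simp
  moreover have "c powr (p - 1) * c powr (1 - p) = 1"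
    using c' by (simp add: powr_add[symmetric])
  moreover have "c powr (p - 1) * c = c powr p"
    using c' powr_add[of c "p - 1" 1] by simp
  ultimately show ?thesis
    by (simp add: mult.assoc[symmetric])
qed

locale gauge_test_function = smooth_gauge d for d :: "('n::finite,'N::finite) grp \<Rightarrow> real" +
  fixes u :: "('n,'N) grp \<Rightarrow> real" and K :: "('n,'N) grp set" and p \<theta> :: real
  assumes p: "p > 1"
    and C1_on_u_off_0: "C1_on (- {0}) u"
    and K: "compact K" "0 \<notin> K"
    and u_outside: "\<And>x. x \<notin> K \<Longrightarrow> u x = 0"
begin

lemma open_Compl_K: "open (- K)"
  using compact_imp_closed[OF K(1)] by (simp add: open_Compl)

lemma C1_on_u: "C1_on UNIV u"
  by (rule C1_on_UNIV_if_compact_support[OF _ K(1) _ C1_on_u_off_0 u_outside])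
    (use K(2) in \<open>auto simp: open_Compl\<close>)

lemma C1_on_abs_powr_u: "C1_on UNIV (\<lambda>y. \<bar>u y\<bar> powr p)"
  by (rule C1_on_real_compose[OF C1_on_u has_real_derivative_abs_powr[OF p]])
    (rule continuous_on_subset[OF continuous_on_sgn_abs_powr[OF p]], simp)

definition u_density :: "('n,'N) grp \<Rightarrow> real" where
  "u_density x = \<bar>u x\<bar> powr p / d x powr (p * \<theta>)"

definition grad_density :: "('n,'N) grp \<Rightarrow> real" where
  "grad_density x = \<bar>hgrad u x \<bullet> Zfield p \<theta> d x\<bar> powr p / d x powr (p * (\<theta> - 1))"

definition cross_density :: "('n,'N) grp \<Rightarrow> real" where
  "cross_density x = p * sgn (u x) * \<bar>u x\<bar> powr (p - 1) * (d x powr (1 - p * \<theta>) * (hgrad u x \<bullet> Zfield p \<theta> d x))"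

lemma continuous_on_hgrad_inner_Zfield: "continuous_on (- {0}) (\<lambda>x. hgrad u x \<bullet> Zfield p \<theta> d x)"
proof -
  have "continuous_on UNIV (Xf j i k u)" for j i k
    unfolding Xf_eq[abs_def]
    by (intro continuous_on_add continuous_on_mult C1_on_continuous_dir_deriv[OF C1_on_u]
        C1_on_imp_continuous_on[OF C1_on_Xcoef])
  then have "continuous_on (- {0}) (Xf j i k u)" for j i k
    by (rule continuous_on_subset) simp
  moreover note C1_on_imp_continuous_on[OF C1_on_zcoord] C1_on_imp_continuous_on[OF C1_on_tcoord]
    C1_on_imp_continuous_on[OF C1_on_hperp_comp] continuous_on_d
  ultimately have "continuous_on (- {0}) (\<lambda>x. \<Sum>j\<in>UNIV. \<Sum>i\<in>UNIV. \<Sum>k\<in>UNIV. Xf j i k u x * Zfield p \<theta> d x $ j $ i $ k)"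
    unfolding Zfield_component using d_nonzero
    by (intro continuous_on_sum continuous_on_mult continuous_on_diff continuous_on_const
        continuous_on_divide continuous_on_power) auto
  then show ?thesis
    by (simp add: inner_vec_def hgrad_def)
qed

lemma u_density_integrable: "u_density integrable_on UNIV"
proof (rule integrable_compact_support[OF _ K(1)])
  have cont: "continuous_on (- {0}) u_density"
    unfolding u_density_def[abs_def] using p d_nonzero
    by (intro continuous_intros continuous_on_powr' continuous_on_subset[OF C1_on_imp_continuous_on[OF C1_on_u]]
        continuous_on_d) auto
  show "continuous_on UNIV u_density"
    by (rule continuous_on_UNIV_if_compact_support[OF _ K(1) _ cont])
      (use K(2) u_outside in \<open>auto simp: u_density_def open_Compl\<close>)
qed (simp add: u_density_def u_outside)

lemma hgrad_u_outside: "x \<notin> K \<Longrightarrow> hgrad u x = 0"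
  using Xf_eq_0_on_open[OF open_Compl_K, of x u] u_outside by (simp add: hgrad_def vec_eq_iff)

lemma grad_density_integrable: "grad_density integrable_on UNIV"
proof (rule integrable_compact_support[OF _ K(1)])
  have cont: "continuous_on (- {0}) grad_density"
    unfolding grad_density_def[abs_def] using p d_nonzero
    by (intro continuous_intros continuous_on_powr' continuous_on_hgrad_inner_Zfield continuous_on_d) auto
  show "continuous_on UNIV grad_density"
    by (rule continuous_on_UNIV_if_compact_support[OF _ K(1) _ cont])
      (use K(2) p hgrad_u_outside in \<open>auto simp: grad_density_def open_Compl\<close>)
qed (use p hgrad_u_outside in \<open>simp add: grad_density_def\<close>)

lemma divergence_identity:
  "(\<Sum>j\<in>UNIV. \<Sum>i\<in>UNIV. \<Sum>k\<in>UNIV. Xf j i k (\<lambda>y. \<bar>u y\<bar> powr p * weighted_Z (p * \<theta>) d j i k y) x)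
    = cross_density x + (2 * real CARD('N) * (real CARD('n) + 1) - p * \<theta>) * u_density x"
proof (cases "x \<in> K")
  case False
  then have "x \<in> - K" "\<And>y. y \<in> - K \<Longrightarrow> \<bar>u y\<bar> powr p * weighted_Z (p * \<theta>) d j i k y = 0" for j i k
    by (simp_all add: u_outside)
  then show ?thesis
    using False Xf_eq_0_on_open[OF open_Compl_K] by (simp add: u_outside u_density_def cross_density_def)
next
  case True
  then have x: "x \<noteq> 0" using K(2) by auto
  have "Xf j i k (\<lambda>y. \<bar>u y\<bar> powr p * weighted_Z (p * \<theta>) d j i k y) x
      = \<bar>u x\<bar> powr p * Xf j i k (weighted_Z (p * \<theta>) d j i k) x
        + p * sgn (u x) * \<bar>u x\<bar> powr (p - 1) * (d x powr (1 - p * \<theta>) * (Xf j i k u x * Zfield p \<theta> d x $ j $ i $ k))"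
    for j i k
    using x C1_on_differentiable[OF C1_on_abs_powr_u] C1_on_differentiable[OF C1_on_u]
      C1_on_differentiable[OF C1_on_weighted_Z]
    by (simp add: Xf_mult Xf_real_compose[OF has_real_derivative_abs_powr[OF p]] weighted_Z_eq_Zfield pos)
  then have "(\<Sum>j\<in>UNIV. \<Sum>i\<in>UNIV. \<Sum>k\<in>UNIV. Xf j i k (\<lambda>y. \<bar>u y\<bar> powr p * weighted_Z (p * \<theta>) d j i k y) x)
      = \<bar>u x\<bar> powr p * (\<Sum>j\<in>UNIV. \<Sum>i\<in>UNIV. \<Sum>k\<in>UNIV. Xf j i k (weighted_Z (p * \<theta>) d j i k) x)
        + p * sgn (u x) * \<bar>u x\<bar> powr (p - 1) * (d x powr (1 - p * \<theta>)
          * (\<Sum>j\<in>UNIV. \<Sum>i\<in>UNIV. \<Sum>k\<in>UNIV. Xf j i k u x * Zfield p \<theta> d x $ j $ i $ k))"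
    by (simp add: sum.distrib sum_distrib_left)
  then show ?thesis
    unfolding divergence_weighted_Z[OF x]
    by (simp add: inner_vec_def hgrad_def u_density_def cross_density_def powr_minus_divide algebra_simps)
qed

lemma has_integral_cross_density:
  "(cross_density has_integral - ((2 * real CARD('N) * (real CARD('n) + 1) - p * \<theta>) * integral UNIV u_density)) UNIV"
  (is "(_ has_integral - (?c * _)) UNIV")
proof -
  have "C1_on UNIV (\<lambda>y. \<bar>u y\<bar> powr p * weighted_Z (p * \<theta>) d j i k y)" for j i k
    by (rule C1_on_UNIV_if_compact_support[OF _ K(1), of "- {0}"])
      (use K(2) u_outside in \<open>auto simp: open_Compl intro!: C1_on_mult C1_on_subset[OF C1_on_abs_powr_u] C1_on_weighted_Z\<close>)
  then have "(Xf j i k (\<lambda>y. \<bar>u y\<bar> powr p * weighted_Z (p * \<theta>) d j i k y) has_integral 0) UNIV" for j i k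
    by (rule has_integral_Xf_compact_support[OF _ K(1)]) (simp add: u_outside)
  then have "((\<lambda>x. cross_density x + ?c * u_density x) has_integral 0) UNIV"
    unfolding divergence_identity[symmetric] by (intro has_integral_sum[where i = "\<lambda>_. 0", simplified]) simp_all
  from has_integral_diff[OF this
      has_integral_mult_right[OF integrable_integral[OF u_density_integrable], where c = ?c]]
  show ?thesis by simp
qed

lemma abs_cross_density_le:
  assumes "\<mu> > 0"
  shows "\<bar>cross_density x\<bar> \<le> (p - 1) * \<mu> * u_density x + \<mu> powr (1 - p) * grad_density x"
proof (cases "u x = 0")
  case True
  then show ?thesis
    using p assms by (simp add: u_density_def grad_density_def cross_density_def)
next
  case False
  then have "x \<in> K" using u_outside by blast
  then have "x \<noteq> 0" using K(2) by auto
  then have D: "d x > 0" by (rule pos)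
  define X Y where "X = \<bar>u x\<bar> * d x powr (- \<theta>)" and "Y = \<bar>hgrad u x \<bullet> Zfield p \<theta> d x\<bar> * d x powr (1 - \<theta>)"
  text \<open>Rescaling by powers of \<open>d\<close> turns the claim into Young's inequality for \<open>X\<close> and \<open>Y\<close>.\<close>
  have XY: "X powr (p - 1) * Y = \<bar>u x\<bar> powr (p - 1) * d x powr (1 - p * \<theta>) * \<bar>hgrad u x \<bullet> Zfield p \<theta> d x\<bar>"
    using D by (simp add: X_def Y_def powr_mult powr_powr powr_add[symmetric] algebra_simps)
  have "X powr p = \<bar>u x\<bar> powr p * d x powr (- (p * \<theta>))"
    using D by (simp add: X_def powr_mult powr_powr mult.commute)
  then have X: "X powr p = u_density x"
    by (simp add: u_density_def powr_minus_divide)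
  have "Y powr p = \<bar>hgrad u x \<bullet> Zfield p \<theta> d x\<bar> powr p * d x powr (- (p * (\<theta> - 1)))"
    using D by (simp add: Y_def powr_mult powr_powr algebra_simps)
  then have Y: "Y powr p = grad_density x"
    by (simp add: grad_density_def powr_minus_divide)
  have "p * (X powr (p - 1) * Y) \<le> (p - 1) * \<mu> * X powr p + \<mu> powr (1 - p) * Y powr p"
    using p assms by (intro Youngs_inequality_weighted) (auto simp: X_def Y_def)
  moreover have "\<bar>cross_density x\<bar> = p * (X powr (p - 1) * Y)"
    unfolding XY cross_density_def using False p by (simp add: abs_mult)
  ultimately show ?thesis
    unfolding X Y by simp
qed

lemma integral_u_density_le:
  "(\<bar>2 * real CARD('N) * (real CARD('n) + 1) - p * \<theta>\<bar> / p) powr p * integral UNIV u_density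
    \<le> integral UNIV grad_density"
proof -
  let ?c = "\<bar>2 * real CARD('N) * (real CARD('n) + 1) - p * \<theta>\<bar> / p"
  have A: "integral UNIV u_density \<ge> 0"
    by (rule Henstock_Kurzweil_Integration.integral_nonneg[OF u_density_integrable]) (simp add: u_density_def)
  have B: "integral UNIV grad_density \<ge> 0"
    by (rule Henstock_Kurzweil_Integration.integral_nonneg[OF grad_density_integrable]) (simp add: grad_density_def)
  have "p * ?c * integral UNIV u_density
      \<le> (p - 1) * \<mu> * integral UNIV u_density + \<mu> powr (1 - p) * integral UNIV grad_density"
    if \<mu>: "\<mu> > 0" for \<mu>
  proof -
    have i1: "(\<lambda>x. (p - 1) * \<mu> * u_density x) integrable_on UNIV"
      using integrable_on_cmult_left[OF u_density_integrable, of "(p - 1) * \<mu>"] by simp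
    have i2: "(\<lambda>x. \<mu> powr (1 - p) * grad_density x) integrable_on UNIV"
      using integrable_on_cmult_left[OF grad_density_integrable, of "\<mu> powr (1 - p)"] by simp
    have "p * ?c * integral UNIV u_density = norm (integral UNIV cross_density)"
      using integral_unique[OF has_integral_cross_density] p A by (simp add: abs_mult)
    also have "\<dots> \<le> integral UNIV (\<lambda>x. (p - 1) * \<mu> * u_density x + \<mu> powr (1 - p) * grad_density x)"
      by (rule Henstock_Kurzweil_Integration.integral_norm_bound_integral[OF _ integrable_add[OF i1 i2]])
        (use has_integral_cross_density abs_cross_density_le[OF \<mu>] in auto)
    also have "\<dots> = (p - 1) * \<mu> * integral UNIV u_density + \<mu> powr (1 - p) * integral UNIV grad_density"
      by (simp add: integral_add[OF i1 i2])
    finally show ?thesis .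
  qed
  then show ?thesis
    using p by (intro powr_le_if_weighted_bounds[OF p _ A B]) auto
qed

lemma nn_integral_u_density_le:
  "ennreal (\<bar>(2 * real CARD('N) * (real CARD('n) + 1) - p * \<theta>) / p\<bar> powr p) * (\<integral>\<^sup>+ x. ennreal (u_density x) \<partial>lborel)
    \<le> (\<integral>\<^sup>+ x. ennreal (grad_density x) \<partial>lborel)"
proof -
  have "integral UNIV u_density \<ge> 0"
    by (rule Henstock_Kurzweil_Integration.integral_nonneg[OF u_density_integrable]) (simp add: u_density_def)
  then have "ennreal (\<bar>(2 * real CARD('N) * (real CARD('n) + 1) - p * \<theta>) / p\<bar> powr p) * ennreal (integral UNIV u_density)
      \<le> ennreal (integral UNIV grad_density)"
    using integral_u_density_le p by (simp add: abs_divide ennreal_mult''[symmetric] ennreal_leI)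
  moreover have "(\<integral>\<^sup>+ x. ennreal (u_density x) \<partial>lborel) = ennreal (integral UNIV u_density)"
    by (rule nn_integral_lborel_eq_integral[OF u_density_integrable]) (simp add: u_density_def)
  moreover have "(\<integral>\<^sup>+ x. ennreal (grad_density x) \<partial>lborel) = ennreal (integral UNIV grad_density)"
    by (rule nn_integral_lborel_eq_integral[OF grad_density_integrable]) (simp add: grad_density_def)
  ultimately show ?thesis by simp
qed

end

lemma smooth_gauge_if_hom_norm:
  assumes "hom_norm d" and "smooth_on (- {0}) d"
  shows "smooth_gauge d"
proof
  show "d x > 0" if "x \<noteq> 0" for x
    using assms(1) that unfolding hom_norm_def by blast
  show "d (dil r x) = r * d x" if "r > 0" for r x
    using assms(1) that unfolding hom_norm_def by blast
  have C2: "Ck_on (Suc (Suc 0)) (- {0}) d"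
    using assms(2) unfolding smooth_on_def by blast
  show "C1_on (- {0}) d"
    by (rule C1_on_if_Ck_on_Suc[OF _ C2]) (simp add: open_Compl)
  show "C1_on (- {0}) (dir_deriv d b)" if "b \<in> Basis" for b
    by (rule C1_on_if_Ck_on_Suc[OF _ Ck_on_Suc_dir_deriv[OF C2 that]]) (simp add: open_Compl)
qed

lemma gauge_test_function_if_Cc_inf:
  assumes "smooth_gauge d" and "p > 1" and "Cc_inf (- {0}) u"
  shows "gauge_test_function d u (closure {x. u x \<noteq> 0}) p"
proof -
  have "Ck_on (Suc 0) (- {0}) u"
    using assms(3) unfolding Cc_inf_def smooth_on_def by blast
  then have "C1_on (- {0}) u"
    by (rule C1_on_if_Ck_on_Suc[rotated]) (simp add: open_Compl)
  moreover have "compact (closure {x. u x \<noteq> 0})" "0 \<notin> closure {x. u x \<noteq> 0}"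
    using assms(3) unfolding Cc_inf_def by blast+
  moreover have "u x = 0" if "x \<notin> closure {x. u x \<noteq> 0}" for x
    using that closure_subset[of "{x. u x \<noteq> 0}"] by blast
  ultimately show ?thesis
    using assms(1,2) gauge_test_function_axioms.intro gauge_test_function.intro by metis
qed

theorem theorem4p2:
  fixes d u :: "('n::finite,'N::finite) grp \<Rightarrow> real"
    and p \<theta> :: real
  assumes "hom_norm d"
    and "smooth_on (- {0}) d"
    and "p \<ge> 2"
    and "Cc_inf (- {0}) u"
  shows "(\<integral>\<^sup>+ x. ennreal (\<bar>hgrad u x \<bullet> Zfield p \<theta> d x\<bar> powr p / d x powr (p * (\<theta> - 1))) \<partial>lborel)
     \<ge> ennreal (\<bar>(2 * real CARD('N) * (real CARD('n) + 1) - p * \<theta>) / p\<bar> powr p)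
       * (\<integral>\<^sup>+ x. ennreal (\<bar>u x\<bar> powr p / d x powr (p * \<theta>)) \<partial>lborel)"
proof -
  interpret gauge_test_function d u "closure {x. u x \<noteq> 0}" p \<theta>
    using assms by (intro gauge_test_function_if_Cc_inf smooth_gauge_if_hom_norm) auto
  show ?thesis
    using nn_integral_u_density_le unfolding u_density_def grad_density_def by simp
qed

end
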